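(* Let $X$ be a convex metric space over a Boolean ring $B$, let $0,0'\in X$, let $\{x_{1},\ldots,x_{n}\}$ be a base of $(X,0)$ and $\{y_{1},\ldots,y_{m}\}$ a base of $(X,0')$. Then $n=m$ and $d(0,x_i)=d(0',y_i)$ for $i=1,\ldots,n$. Moreover, there exists an isometry $f:X\to X$ with $f(0)=0'$ and $f(x_{i})=y_{i}$ for $i=1,\ldots,n$.
   Context: $B$ is a Boolean ring ($a\vee b=a+b+ab$, $a\le b\iff ab=a$; $a_1\oplus\cdots\oplus a_n$ denotes a sum of pairwise disjoint elements). A Boolean metric space over $B$: set $X$ with $d:X\times X\to B$, $d(x,y)=0\iff x=y$, symmetric, $d(x,z)\le d(x,y)\vee d(y,z)$. For $x_1,\dots,x_n\in X$, $a_1,\dots,a_n\in B$ with $a_1\oplus\cdots\oplus a_n=1$, $x$ is a convex combination of the $x_i$ with coefficients $a_i$ if $a_id(x,x_i)=0$ for all $i$; $X$ is convex if all such combinations exist. An isometry is a bijection preserving $d$. In a pointed space $(X,0)$, $|x|=d(0,x)$; $x,y$ are orthogonal if $d(x,y)=|x|\vee|y|$; a finite $R\subseteq X$ is orthogonal if $0\notin R$ and distinct elements are orthogonal; a referential of $(X,0)$ is an orthogonal $R$ such that every element of $X$ is a convex combination of elements of $R\cup\{0\}$; a base of $(X,0)$ is a referential $\{x_1,\dots,x_n\}$ with $|x_1|\ge\cdots\ge|x_n|$. *)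

theory Defs
  imports Main
begin

class boolean_ring = comm_ring_1 +
  assumes mult_idem_br: "x * x = x"

definition bjoin :: "'b::boolean_ring \<Rightarrow> 'b \<Rightarrow> 'b" where
  "bjoin a b = a + b + a * b"

definition ble :: "'b::boolean_ring \<Rightarrow> 'b \<Rightarrow> bool" where
  "ble a b \<longleftrightarrow> a * b = a"

definition boolean_metric :: "'a set \<Rightarrow> ('a \<Rightarrow> 'a \<Rightarrow> 'b::boolean_ring) \<Rightarrow> bool" where
  "boolean_metric X d \<longleftrightarrow>
     (\<forall>x\<in>X. \<forall>y\<in>X. d x y = 0 \<longleftrightarrow> x = y) \<and>
     (\<forall>x\<in>X. \<forall>y\<in>X. d x y = d y x) \<and>
     (\<forall>x\<in>X. \<forall>y\<in>X. \<forall>z\<in>X. ble (d x z) (bjoin (d x y) (d y z)))"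

definition disjoint_sum_one :: "nat \<Rightarrow> (nat \<Rightarrow> 'b::boolean_ring) \<Rightarrow> bool" where
  "disjoint_sum_one n a \<longleftrightarrow>
     (\<forall>i<n. \<forall>j<n. i \<noteq> j \<longrightarrow> a i * a j = 0) \<and> (\<Sum>i<n. a i) = 1"

definition is_conv_comb :: "('a \<Rightarrow> 'a \<Rightarrow> 'b::boolean_ring) \<Rightarrow> 'a \<Rightarrow> nat \<Rightarrow> (nat \<Rightarrow> 'a) \<Rightarrow> (nat \<Rightarrow> 'b) \<Rightarrow> bool" where
  "is_conv_comb d x n xs a \<longleftrightarrow> disjoint_sum_one n a \<and> (\<forall>i<n. a i * d x (xs i) = 0)"

definition convex_bms :: "'a set \<Rightarrow> ('a \<Rightarrow> 'a \<Rightarrow> 'b::boolean_ring) \<Rightarrow> bool" where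
  "convex_bms X d \<longleftrightarrow>
     (\<forall>n xs a. (\<forall>i<n. xs i \<in> X) \<longrightarrow> disjoint_sum_one n a \<longrightarrow>
        (\<exists>x\<in>X. is_conv_comb d x n xs a))"

definition orthogonal :: "('a \<Rightarrow> 'a \<Rightarrow> 'b::boolean_ring) \<Rightarrow> 'a \<Rightarrow> 'a \<Rightarrow> 'a \<Rightarrow> bool" where
  "orthogonal d z x y \<longleftrightarrow> d x y = bjoin (d z x) (d z y)"

definition orthogonal_set :: "('a \<Rightarrow> 'a \<Rightarrow> 'b::boolean_ring) \<Rightarrow> 'a \<Rightarrow> 'a set \<Rightarrow> bool" where
  "orthogonal_set d z R \<longleftrightarrow> finite R \<and> z \<notin> R \<and>
     (\<forall>x\<in>R. \<forall>y\<in>R. x \<noteq> y \<longrightarrow> orthogonal d z x y)"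

definition referential :: "'a set \<Rightarrow> ('a \<Rightarrow> 'a \<Rightarrow> 'b::boolean_ring) \<Rightarrow> 'a \<Rightarrow> 'a set \<Rightarrow> bool" where
  "referential X d z R \<longleftrightarrow> R \<subseteq> X \<and> orthogonal_set d z R \<and>
     (\<forall>x\<in>X. \<exists>n xs a. (\<forall>i<n. xs i \<in> R \<union> {z}) \<and> is_conv_comb d x n xs a)"

text \<open>A base, as an enumeration x_1,...,x_n (a distinct list) with |x_1| \<ge> ... \<ge> |x_n|.\<close>
definition is_base :: "'a set \<Rightarrow> ('a \<Rightarrow> 'a \<Rightarrow> 'b::boolean_ring) \<Rightarrow> 'a \<Rightarrow> 'a list \<Rightarrow> bool" where
  "is_base X d z xs \<longleftrightarrow> distinct xs \<and> referential X d z (set xs) \<and>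
     sorted_wrt (\<lambda>x y. ble (d z y) (d z x)) xs"

definition isometry_on :: "'a set \<Rightarrow> ('a \<Rightarrow> 'a \<Rightarrow> 'b) \<Rightarrow> ('a \<Rightarrow> 'a) \<Rightarrow> bool" where
  "isometry_on X d f \<longleftrightarrow> bij_betw f X X \<and> (\<forall>x\<in>X. \<forall>y\<in>X. d (f x) (f y) = d x y)"

end

theory Submission imports Defs begin

(*
  Write |x| for the distance of x to the origin of its base (z or z').
  The proof has two halves.

  If x_1..x_n is a base at z and y_1..y_m a base at z', then
  |y_k| <= |x_k| for every k (reading |x_k| = 0 for k > n).  Localising to the region
  g = |y_k| * (1 + |x_k|), every point of X lies, locally, on one of the k+1 points
  z, x_1..x_{k-1} (the later x_i vanish on g), whereas the k+2 points z', y_1..y_k are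
  pairwise g-separated.  A Boolean pigeonhole principle (separated_cover_zero) forces
  g = 0.  By symmetry n = m and |x_k| = |y_k|, so the frames z,x_1..x_n and z',y_1..y_n
  have the same mutual distances.

  A distance-preserving correspondence between two finite
  spanning families of a convex space extends to an isometry of the whole space: map x
  to a point with the same convex coordinates (same_coords); distances are computed
  locally on the pieces of the partitions, so the map is well defined and isometric.
*)

section \<open>Arithmetic of Boolean rings\<close>

lemma br_add_self [simp]: "(x::'b::boolean_ring) + x = 0"
proof -
  have "x*x + x*x + (x*x + x*x) = x + x"
    using mult_idem_br[of "x+x"] by (simp only: distrib_left distrib_right)
  hence "x + x + (x + x) = x + x" by (simp only: mult_idem_br)
  thus ?thesis by (metis add_cancel_left_left)
qed

text \<open>Characteristic 2: elements with zero sum are equal.\<close>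
lemma br_eq_of_sum0: "(x::'b::boolean_ring) + y = 0 \<Longrightarrow> x = y"
proof -
  assume h: "x + y = 0"
  have "x = x + (y + y)" by simp
  also have "\<dots> = (x + y) + y" by (simp only: add.assoc)
  also have "\<dots> = y" using h by simp
  finally show "x = y" .
qed

lemma ble_iff_compl_zero: "ble a b \<longleftrightarrow> (a::'b::boolean_ring) * (1 + b) = 0"
proof
  assume "ble a b"
  thus "a * (1 + b) = 0" unfolding ble_def by (simp add: distrib_left)
next
  assume "a * (1 + b) = 0"
  hence "a + a * b = 0" by (simp add: distrib_left)
  thus "ble a b" unfolding ble_def by (metis br_eq_of_sum0)
qed

lemma ble_antisym: "ble a b \<Longrightarrow> ble b a \<Longrightarrow> (a::'b::boolean_ring) = b"
  unfolding ble_def by (metis mult.commute)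

section \<open>Boolean metrics: distances are local\<close>

lemma bm_zero: "boolean_metric X d \<Longrightarrow> x \<in> X \<Longrightarrow> y \<in> X \<Longrightarrow> d x y = 0 \<longleftrightarrow> x = y"
  unfolding boolean_metric_def by blast

lemma bm_sym: "boolean_metric X d \<Longrightarrow> x \<in> X \<Longrightarrow> y \<in> X \<Longrightarrow> d x y = d y x"
  unfolding boolean_metric_def by blast

lemma bm_tri: "boolean_metric X d \<Longrightarrow> x \<in> X \<Longrightarrow> y \<in> X \<Longrightarrow> w \<in> X \<Longrightarrow>
   d x w * (d x y + d y w + d x y * d y w) = d x w"
  unfolding boolean_metric_def ble_def bjoin_def by blast

lemma local_dist_eq:
  assumes bm: "boolean_metric X d" and X: "x \<in> X" "y \<in> X" "w \<in> X"
    and A: "A * d x y = 0"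
  shows "A * d x w = A * d y w"
proof -
  have tx: "d x w * (d x y + d y w + d x y * d y w) = d x w" using bm_tri[OF bm X] .
  have ty: "d y w * (d x y + d x w + d x y * d x w) = d y w"
    using bm_tri[OF bm X(2,1,3)] bm_sym[OF bm X(2,1)] by simp
  have "A * d x w = A * (d x w * (d x y + d y w + d x y * d y w))" using tx by simp
  also have "\<dots> = d x w * (A * d x y) + A * d x w * d y w + d x w * (A * d x y) * d y w"
    by (simp add: algebra_simps)
  finally have a: "A * d x w = A * d x w * d y w" using A by simp
  have "A * d y w = A * (d y w * (d x y + d x w + d x y * d x w))" using ty by simp
  also have "\<dots> = d y w * (A * d x y) + A * d y w * d x w + d y w * (A * d x y) * d x w"
    by (simp add: algebra_simps)
  finally have b: "A * d y w = A * d y w * d x w" using A by simp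
  from a b show ?thesis by (simp add: ac_simps)
qed

lemma local_dist_zero:
  assumes bm: "boolean_metric X d" and X: "x \<in> X" "y \<in> X" "w \<in> X"
    and A: "A * d x y = 0" "A * d y w = 0"
  shows "A * d x w = 0"
  using local_dist_eq[OF bm X A(1)] A(2) by simp

lemma local_dist_pair:
  assumes bm: "boolean_metric X d" and X: "x \<in> X" "x' \<in> X" "p \<in> X" "p' \<in> X"
    and A: "A * d x p = 0" "A * d x' p' = 0"
  shows "A * d x x' = A * d p p'"
proof -
  have "A * d x x' = A * d p x'" by (rule local_dist_eq[OF bm X(1,3,2) A(1)])
  also have "\<dots> = A * d x' p" using bm_sym[OF bm X(3,2)] by simp
  also have "\<dots> = A * d p' p" by (rule local_dist_eq[OF bm X(2,4,3) A(2)])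
  also have "\<dots> = A * d p p'" using bm_sym[OF bm X(4,3)] by simp
  finally show ?thesis .
qed

text \<open>Two points that both coincide with \<open>v\<close> on a region coincide with each other there.\<close>
lemma coincide_at_point:
  assumes bm: "boolean_metric X d" and X: "x \<in> X" "y \<in> X" "v \<in> X"
  shows "(1 + d x v) * (1 + d y v) * d x y = 0"
proof -
  define A where "A = (1 + d x v) * (1 + d y v)"
  have "A * d x v = (d x v + d x v * d x v) * (1 + d y v)"
    unfolding A_def by (simp add: algebra_simps)
  hence Ax: "A * d x v = 0" by (simp add: mult_idem_br)
  have "A * d y v = (1 + d x v) * (d y v + d y v * d y v)"
    unfolding A_def by (simp add: algebra_simps)
  hence Ay: "A * d v y = 0" using bm_sym[OF bm X(2,3)] by (simp add: mult_idem_br)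
  show ?thesis using local_dist_zero[OF bm X(1,3,2) Ax Ay] unfolding A_def .
qed

section \<open>Partitions of unity and convex coordinates\<close>

lemma partition_zero:
  assumes part: "disjoint_sum_one N c" and h: "\<forall>j<N. c j * u = 0"
  shows "(u::'b::boolean_ring) = 0"
proof -
  have "u = (\<Sum>j<N. c j) * u" using part unfolding disjoint_sum_one_def by simp
  also have "\<dots> = (\<Sum>j<N. c j * u)" by (simp add: sum_distrib_right)
  also have "\<dots> = 0" using h by simp
  finally show ?thesis .
qed

lemma partition_eq:
  assumes part: "disjoint_sum_one N c" "disjoint_sum_one N' c'"
    and h: "\<forall>j<N. \<forall>l<N'. c j * c' l * u = c j * c' l * v"
  shows "u = (v::'b::boolean_ring)"
proof -
  have "c j * (u + v) = 0" if j: "j < N" for j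
  proof (rule partition_zero[OF part(2)], intro allI impI)
    fix l assume "l < N'"
    hence "c j * c' l * u + c j * c' l * v = 0" using h j by simp
    thus "c' l * (c j * (u + v)) = 0" by (simp add: algebra_simps)
  qed
  hence "u + v = 0" using partition_zero[OF part(1)] by blast
  thus ?thesis by (rule br_eq_of_sum0)
qed

lemma is_conv_comb_cong:
  "(\<And>i. i < N \<Longrightarrow> p i = q i) \<Longrightarrow> is_conv_comb d x N p c = is_conv_comb d x N q c"
  unfolding is_conv_comb_def by simp

lemma conv_comb_self: "boolean_metric X d \<Longrightarrow> q \<in> X \<Longrightarrow> is_conv_comb d q 1 (\<lambda>_. q) (\<lambda>_. 1)"
  using bm_zero unfolding is_conv_comb_def disjoint_sum_one_def by fastforce

lemma conv_comb_dist:
  assumes bm: "boolean_metric X d" and X: "x \<in> X" "x' \<in> X" "y \<in> X" "y' \<in> X"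
    and pX: "\<forall>j<N. p j \<in> X \<and> q j \<in> X" and p'X: "\<forall>l<N'. p' l \<in> X \<and> q' l \<in> X"
    and cx: "is_conv_comb d x N p c" and cx': "is_conv_comb d x' N' p' c'"
    and cy: "is_conv_comb d y N q c" and cy': "is_conv_comb d y' N' q' c'"
    and D: "\<forall>j<N. \<forall>l<N'. d (q j) (q' l) = d (p j) (p' l)"
  shows "d y y' = d x x'"
proof (rule partition_eq)
  show "disjoint_sum_one N c" "disjoint_sum_one N' c'"
    using cx cx' unfolding is_conv_comb_def by auto
  show "\<forall>j<N. \<forall>l<N'. c j * c' l * d y y' = c j * c' l * d x x'"
  proof (intro allI impI)
    fix j l assume j: "j < N" and l: "l < N'"
    have near: "c j * c' l * d x (p j) = 0" "c j * c' l * d x' (p' l) = 0"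
      "c j * c' l * d y (q j) = 0" "c j * c' l * d y' (q' l) = 0"
      using cx cx' cy cy' j l unfolding is_conv_comb_def
      by (metis mult.assoc mult.commute mult_zero_left)+
    have "c j * c' l * d y y' = c j * c' l * d (q j) (q' l)"
      using local_dist_pair[OF bm X(3,4) _ _ near(3,4)] pX p'X j l by auto
    also have "\<dots> = c j * c' l * d (p j) (p' l)" using D j l by simp
    also have "\<dots> = c j * c' l * d x x'"
      using local_dist_pair[OF bm X(1,2) _ _ near(1,2)] pX p'X j l by auto
    finally show "c j * c' l * d y y' = c j * c' l * d x x'" .
  qed
qed

text \<open>If \<open>w\<close> is a convex combination of points each of which lies in \<open>V \<ni> z\<close> or coincides
  with \<open>z\<close> on the region \<open>g\<close>, then on \<open>g\<close> the point \<open>w\<close> coincides with some point of \<open>V\<close>.\<close>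
lemma conv_comb_prod_zero:
  assumes bm: "boolean_metric X d" and zX: "z \<in> X" and wX: "w \<in> X"
    and fV: "finite V" and zV: "z \<in> V"
    and cc: "is_conv_comb d w N p c" and pX: "\<forall>j<N. p j \<in> X"
    and far: "\<forall>j<N. p j \<notin> V \<longrightarrow> g * d z (p j) = 0"
  shows "g * prod (d w) V = 0"
proof (rule partition_zero[of N c])
  show "disjoint_sum_one N c" using cc unfolding is_conv_comb_def by simp
  show "\<forall>j<N. c j * (g * prod (d w) V) = 0"
  proof (intro allI impI)
    fix j assume j: "j < N"
    have cj: "c j * d w (p j) = 0" using cc j unfolding is_conv_comb_def by simp
    show "c j * (g * prod (d w) V) = 0"
    proof (cases "p j \<in> V")
      case True
      have "c j * (g * prod (d w) V) = g * (c j * d w (p j)) * prod (d w) (V - {p j})"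
        using prod.remove[OF fV True, of "d w"] by (simp add: ac_simps)
      thus ?thesis using cj by simp
    next
      case False
      have pjX: "p j \<in> X" using pX j by simp
      have "(c j * g) * d w (p j) = 0" using cj by (simp add: ac_simps)
      moreover have "(c j * g) * d (p j) z = c j * (g * d z (p j))"
        using bm_sym[OF bm pjX zX] by (simp add: ac_simps)
      moreover have "g * d z (p j) = 0" using far j False by simp
      ultimately have wz: "(c j * g) * d w z = 0" using local_dist_zero[OF bm wX pjX zX] by simp
      have "c j * (g * prod (d w) V) = (c j * g) * d w z * prod (d w) (V - {z})"
        using prod.remove[OF fV zV, of "d w"] by (simp add: ac_simps)
      thus ?thesis using wz by simp
    qed
  qed
qed

section \<open>A Boolean pigeonhole principle\<close>

text \<open>Induction step of the pigeonhole principle: if \<open>w'\<close> is \<open>g\<close>-separated from \<open>w\<close> and lies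
  near \<open>insert v V\<close>, then on the region where \<open>w = v\<close> it lies near \<open>V\<close>.\<close>
lemma restrict_cover:
  assumes bm: "boolean_metric X d" and X: "w \<in> X" "w' \<in> X" "v \<in> X"
    and fV: "finite V" and vV: "v \<notin> V"
    and sep: "g * d w w' = g" and near: "g * prod (d w') (insert v V) = 0"
  shows "g * (1 + d w v) * prod (d w') V = 0"
proof -
  define h where "h = g * (1 + d w v)"
  have "h * (1 + d w' v) = g * ((1 + d w v) * (1 + d w' v) * d w w')"
    unfolding h_def using sep by (metis mult.assoc mult.commute)
  hence h1: "h * (1 + d w' v) = 0" using coincide_at_point[OF bm X] by simp
  have "h * prod (d w') V = h * d w' v * prod (d w') V + h * (1 + d w' v) * prod (d w') V"
    by (simp add: algebra_simps)
  also have "\<dots> = (1 + d w v) * (g * prod (d w') (insert v V))"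
    using h1 fV vV unfolding h_def by (simp add: ac_simps)
  also have "\<dots> = 0" using near by simp
  finally show ?thesis unfolding h_def .
qed

lemma separated_cover_zero:
  assumes bm: "boolean_metric X d" and fV: "finite V"
  shows "V \<subseteq> X \<Longrightarrow> finite W \<Longrightarrow> W \<subseteq> X \<Longrightarrow> card V < card W \<Longrightarrow>
    \<forall>w\<in>W. g * prod (d w) V = 0 \<Longrightarrow> \<forall>w\<in>W. \<forall>w'\<in>W. w \<noteq> w' \<longrightarrow> g * d w w' = g \<Longrightarrow> g = 0"
  using fV
proof (induction V arbitrary: g W rule: finite_induct)
  case empty
  then obtain w where "w \<in> W" by fastforce
  with empty show ?case by auto
next
  case (insert v V)
  have vX: "v \<in> X" and VX: "V \<subseteq> X" using insert.prems by auto
  have below_v: "g * (1 + d w v) = 0" if wW: "w \<in> W" for w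
  proof -
    have "card W - 1 = card (W - {w})" using wW insert.prems by simp
    hence card_less: "card V < card (W - {w})" using insert.prems insert.hyps by simp
    have near: "\<forall>w'\<in>W - {w}. g * (1 + d w v) * prod (d w') V = 0"
      using restrict_cover[OF bm _ _ vX insert.hyps] insert.prems wW by (metis DiffE insertI1 subsetD)
    have sep: "\<forall>a\<in>W - {w}. \<forall>b\<in>W - {w}. a \<noteq> b \<longrightarrow> g * (1 + d w v) * d a b = g * (1 + d w v)"
      using insert.prems by (metis DiffD1 mult.assoc mult.commute)
    show ?thesis using insert.IH[OF VX _ _ card_less near sep] insert.prems by auto
  qed
  have near: "\<forall>w\<in>W. g * prod (d w) V = 0"
  proof
    fix w assume wW: "w \<in> W"
    have "g = g * d w v" using below_v[OF wW] ble_iff_compl_zero[of g "d w v"]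
      unfolding ble_def by simp
    moreover have "g * prod (d w) (insert v V) = (g * d w v) * prod (d w) V"
      using insert.hyps by (simp add: ac_simps)
    ultimately have "g * prod (d w) V = g * prod (d w) (insert v V)" by simp
    thus "g * prod (d w) V = 0" using insert.prems wW by simp
  qed
  have "card V < card W" using insert.prems insert.hyps by simp
  thus ?case using insert.IH[OF VX _ _ _ near] insert.prems by auto
qed

section \<open>Bases\<close>

definition spanned_by :: "'a set \<Rightarrow> ('a \<Rightarrow> 'a \<Rightarrow> 'b::boolean_ring) \<Rightarrow> 'a set \<Rightarrow> bool" where
  "spanned_by X d S \<longleftrightarrow> (\<forall>x\<in>X. \<exists>N p c. (\<forall>j<N. p j \<in> S) \<and> is_conv_comb d x N p c)"

lemma base_distinct: "is_base X d z xs \<Longrightarrow> distinct xs"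
  unfolding is_base_def by blast

lemma base_subset: "is_base X d z xs \<Longrightarrow> set xs \<subseteq> X"
  unfolding is_base_def referential_def by blast

lemma base_origin: "is_base X d z xs \<Longrightarrow> z \<notin> set xs"
  unfolding is_base_def referential_def orthogonal_set_def by blast

lemma base_spans: "is_base X d z xs \<Longrightarrow> spanned_by X d (set (z # xs))"
  unfolding is_base_def referential_def spanned_by_def by auto

lemma base_orth: "is_base X d z xs \<Longrightarrow> i < length xs \<Longrightarrow> j < length xs \<Longrightarrow> i \<noteq> j \<Longrightarrow>
   d (xs!i) (xs!j) = bjoin (d z (xs!i)) (d z (xs!j))"
  unfolding is_base_def referential_def orthogonal_set_def orthogonal_def
  by (metis nth_eq_iff_index_eq nth_mem)

lemma base_mono: "is_base X d z xs \<Longrightarrow> i \<le> j \<Longrightarrow> j < length xs \<Longrightarrow>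
   d z (xs!j) * d z (xs!i) = d z (xs!j)"
  by (cases "i = j") (auto simp: mult_idem_br is_base_def ble_def sorted_wrt_iff_nth_less)

lemma base_norm_nonzero: "boolean_metric X d \<Longrightarrow> z \<in> X \<Longrightarrow> is_base X d z xs \<Longrightarrow> i < length xs \<Longrightarrow>
   d z (xs!i) \<noteq> 0"
  using bm_zero base_subset base_origin nth_mem by (metis subsetD)

lemma base_prefix_separated:
  assumes bm: "boolean_metric X d" and z'X: "z' \<in> X" and bY: "is_base X d z' ys"
    and k: "k < length ys"
    and W: "w \<in> insert z' (nth ys ` {..k})" "w' \<in> insert z' (nth ys ` {..k})" "w \<noteq> w'"
  shows "d z' (ys!k) * d w w' = d z' (ys!k)"
proof -
  have below: "d z' (ys!k) * d z' (ys!j) = d z' (ys!k)" if "j \<le> k" for j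
    using base_mono[OF bY that k] .
  have ysX: "ys!j \<in> X" if "j \<le> k" for j using base_subset[OF bY] k that by auto
  consider "w = z'" "\<exists>j\<le>k. w' = ys!j" | "w' = z'" "\<exists>j\<le>k. w = ys!j"
    | "\<exists>i\<le>k. \<exists>j\<le>k. w = ys!i \<and> w' = ys!j \<and> i \<noteq> j"
    using W by auto
  thus ?thesis
  proof cases
    case 1 thus ?thesis using below by auto
  next
    case 2 thus ?thesis using below bm_sym[OF bm _ z'X] ysX by metis
  next
    case 3
    then obtain i j where ij: "i \<le> k" "j \<le> k" "w = ys!i" "w' = ys!j" "i \<noteq> j" by blast
    hence "d w w' = bjoin (d z' (ys!i)) (d z' (ys!j))" using base_orth[OF bY] k by simp
    hence "d z' (ys!k) * d w w' = d z' (ys!k) * d z' (ys!i) + d z' (ys!k) * d z' (ys!j)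
        + d z' (ys!k) * d z' (ys!j) * d z' (ys!i)"
      unfolding bjoin_def by (simp add: algebra_simps)
    also have "\<dots> = d z' (ys!k) * d z' (ys!i) + d z' (ys!k) + d z' (ys!k) * d z' (ys!i)"
      using below[OF ij(2)] by simp
    also have "\<dots> = d z' (ys!k)" by (metis add.commute add.left_commute br_add_self add_0)
    finally show ?thesis .
  qed
qed

lemma base_norm_below:
  assumes bm: "boolean_metric X d" and zX: "z \<in> X" and z'X: "z' \<in> X"
    and bx: "is_base X d z xs" and bY: "is_base X d z' ys" and k: "k < length ys"
  shows "ble (d z' (ys!k)) (if k < length xs then d z (xs!k) else 0)"
proof -
  define A where "A = (if k < length xs then d z (xs!k) else 0)"
  define g where "g = d z' (ys!k) * (1 + A)"
  define V where "V = insert z (nth xs ` {i. i < k \<and> i < length xs})"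
  define W where "W = insert z' (nth ys ` {..k})"
  have VX: "V \<subseteq> X" unfolding V_def using zX base_subset[OF bx] by auto
  have WX: "W \<subseteq> X" unfolding W_def using z'X base_subset[OF bY] k by auto
  have "card V \<le> Suc (card (nth xs ` {i. i < k \<and> i < length xs}))"
    unfolding V_def by (rule card_insert_le_m1) simp_all
  also have "card (nth xs ` {i. i < k \<and> i < length xs}) \<le> card {i. i < k \<and> i < length xs}"
    by (rule card_image_le) simp
  also have "card {i. i < k \<and> i < length xs} \<le> card {..<k}" by (rule card_mono) auto
  finally have card_V: "card V \<le> Suc k" by simp
  have "card W = Suc (card (nth ys ` {..k}))"
    unfolding W_def using base_origin[OF bY] k by (subst card_insert_disjoint) auto
  also have "card (nth ys ` {..k}) = Suc k"
    using base_distinct[OF bY] k by (subst card_image) (auto intro!: inj_on_nth)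
  finally have "card W = Suc (Suc k)" .
  hence card_less: "card V < card W" using card_V by simp
  have tail_vanishes: "g * d z (xs!i) = 0" if i: "k \<le> i" "i < length xs" for i
  proof -
    have "g * d z (xs!i) = d z' (ys!k) * (d z (xs!i) + d z (xs!i) * d z (xs!k))"
      unfolding g_def A_def using i by (simp add: algebra_simps)
    thus ?thesis using base_mono[OF bx i] by simp
  qed
  have near: "\<forall>w\<in>W. g * prod (d w) V = 0"
  proof
    fix w assume "w \<in> W"
    hence wX: "w \<in> X" using WX by auto
    obtain N p c where p: "\<forall>j<N. p j \<in> set (z # xs)" and cc: "is_conv_comb d w N p c"
      using base_spans[OF bx] wX unfolding spanned_by_def by blast
    have far: "g * d z (p j) = 0" if j: "j < N" and pV: "p j \<notin> V" for j
    proof -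
      obtain i where i: "i < length xs" "p j = xs!i"
        using p j pV unfolding V_def by (auto simp: in_set_conv_nth)
      hence "k \<le> i" using pV unfolding V_def by auto
      thus ?thesis using tail_vanishes i by simp
    qed
    have "\<forall>j<N. p j \<in> X" using p zX base_subset[OF bx] by auto
    thus "g * prod (d w) V = 0"
      using conv_comb_prod_zero[OF bm zX wX _ _ cc] far unfolding V_def by simp
  qed
  have sep: "\<forall>w\<in>W. \<forall>w'\<in>W. w \<noteq> w' \<longrightarrow> g * d w w' = g"
    using base_prefix_separated[OF bm z'X bY k] unfolding g_def W_def
    by (metis mult.assoc mult.commute)
  have "g = 0" using separated_cover_zero[OF bm _ VX _ WX card_less near sep] unfolding V_def W_def by simp
  thus ?thesis unfolding g_def A_def ble_iff_compl_zero .
qed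

lemma base_length_le:
  assumes bm: "boolean_metric X d" and zX: "z \<in> X" and z'X: "z' \<in> X"
    and bx: "is_base X d z xs" and bY: "is_base X d z' ys"
  shows "length ys \<le> length xs"
proof (rule ccontr)
  assume "\<not> length ys \<le> length xs"
  hence k: "length xs < length ys" by simp
  have "d z' (ys ! length xs) = 0"
    using base_norm_below[OF bm zX z'X bx bY k] unfolding ble_def by simp
  thus False using base_norm_nonzero[OF bm z'X bY k] by simp
qed

lemma base_norm_le:
  assumes bm: "boolean_metric X d" and zX: "z \<in> X" and z'X: "z' \<in> X"
    and bx: "is_base X d z xs" and bY: "is_base X d z' ys"
    and i: "i < length xs" "i < length ys"
  shows "ble (d z' (ys!i)) (d z (xs!i))"
  using base_norm_below[OF bm zX z'X bx bY i(2)] i(1) by simp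

text \<open>Bases with equal norms give frames \<open>z # xs\<close>, \<open>z' # ys\<close> with equal mutual distances,
  since distances within a frame are determined by the norms.\<close>
lemma base_frame_dist:
  assumes bm: "boolean_metric X d" and zX: "z \<in> X" and z'X: "z' \<in> X"
    and bx: "is_base X d z xs" and bY: "is_base X d z' ys" and len: "length xs = length ys"
    and norms: "\<forall>i<length xs. d z (xs!i) = d z' (ys!i)"
    and s: "s < length (z # xs)" and t: "t < length (z # xs)"
  shows "d ((z'#ys)!s) ((z'#ys)!t) = d ((z#xs)!s) ((z#xs)!t)"
proof -
  have xX: "xs!i \<in> X" and yX: "ys!i \<in> X" if "i < length xs" for i
    using base_subset[OF bx] base_subset[OF bY] len that by auto
  show ?thesis
  proof (cases s)
    case 0
    show ?thesis
    proof (cases t)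
      case 0 thus ?thesis using \<open>s = 0\<close> bm_zero[OF bm zX zX] bm_zero[OF bm z'X z'X] by simp
    next
      case (Suc t') thus ?thesis using \<open>s = 0\<close> norms t by simp
    qed
  next
    case (Suc s')
    show ?thesis
    proof (cases t)
      case 0 thus ?thesis using \<open>s = Suc s'\<close> norms s bm_sym[OF bm] xX yX zX z'X by simp
    next
      case (Suc t')
      show ?thesis
      proof (cases "s' = t'")
        case True
        have i: "t' < length xs" using Suc t by simp
        show ?thesis using True \<open>s = Suc s'\<close> Suc
            bm_zero[OF bm xX[OF i] xX[OF i]] bm_zero[OF bm yX[OF i] yX[OF i]] by simp
      next
        case False
        thus ?thesis using \<open>s = Suc s'\<close> Suc s t base_orth[OF bx] base_orth[OF bY] norms len by simp
      qed
    qed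
  qed
qed

section \<open>Extending isometries between spanning families\<close>

definition same_coords ::
  "('a \<Rightarrow> 'a \<Rightarrow> 'b::boolean_ring) \<Rightarrow> 'a list \<Rightarrow> 'a list \<Rightarrow> 'a \<Rightarrow> 'a \<Rightarrow> bool" where
  "same_coords d ps qs x y \<longleftrightarrow> (\<exists>N idx c. (\<forall>j<N. idx j < length ps) \<and>
     is_conv_comb d x N (\<lambda>j. ps ! idx j) c \<and> is_conv_comb d y N (\<lambda>j. qs ! idx j) c)"

lemma same_coords_sym:
  "length ps = length qs \<Longrightarrow> same_coords d ps qs x y \<Longrightarrow> same_coords d qs ps y x"
  unfolding same_coords_def by auto

lemma same_coords_point:
  "boolean_metric X d \<Longrightarrow> i < length ps \<Longrightarrow> ps!i \<in> X \<Longrightarrow> qs!i \<in> X \<Longrightarrow>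
   same_coords d ps qs (ps!i) (qs!i)"
  unfolding same_coords_def using conv_comb_self by fastforce

lemma same_coords_exists:
  assumes cv: "convex_bms X d" and span: "spanned_by X d (set ps)"
    and qsX: "set qs \<subseteq> X" and len: "length ps = length qs" and xX: "x \<in> X"
  shows "\<exists>y\<in>X. same_coords d ps qs x y"
proof -
  obtain N p c where p: "\<forall>j<N. p j \<in> set ps" and cc: "is_conv_comb d x N p c"
    using span xX unfolding spanned_by_def by blast
  define idx where "idx j = (SOME i. i < length ps \<and> ps!i = p j)" for j
  have idx: "idx j < length ps \<and> ps ! idx j = p j" if "j < N" for j
  proof -
    have "\<exists>i. i < length ps \<and> ps!i = p j" using p that by (auto simp: in_set_conv_nth)
    thus ?thesis unfolding idx_def by (rule someI_ex)
  qed
  have "is_conv_comb d x N (\<lambda>j. ps ! idx j) c = is_conv_comb d x N p c"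
    by (rule is_conv_comb_cong) (simp add: idx)
  hence cx: "is_conv_comb d x N (\<lambda>j. ps ! idx j) c" using cc by simp
  have "\<forall>j<N. qs ! idx j \<in> X" using idx len qsX by (simp add: subset_iff)
  moreover have "disjoint_sum_one N c" using cc unfolding is_conv_comb_def by simp
  ultimately obtain y where y: "y \<in> X" "is_conv_comb d y N (\<lambda>j. qs ! idx j) c"
    using cv[unfolded convex_bms_def, rule_format, of N "\<lambda>j. qs ! idx j" c] by blast
  have "same_coords d ps qs x y"
    unfolding same_coords_def using idx cx y(2) by (intro exI[of _ N] exI[of _ idx] exI[of _ c]) simp
  thus ?thesis using y(1) by blast
qed

lemma same_coords_dist:
  assumes bm: "boolean_metric X d" and psX: "set ps \<subseteq> X" and qsX: "set qs \<subseteq> X"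
    and len: "length ps = length qs"
    and D: "\<forall>i<length ps. \<forall>j<length ps. d (qs!i) (qs!j) = d (ps!i) (ps!j)"
    and X: "x \<in> X" "x' \<in> X" "y \<in> X" "y' \<in> X"
    and xy: "same_coords d ps qs x y" and xy': "same_coords d ps qs x' y'"
  shows "d y y' = d x x'"
proof -
  obtain N idx c where idx: "\<forall>j<N. idx j < length ps"
    and cx: "is_conv_comb d x N (\<lambda>j. ps ! idx j) c" and cy: "is_conv_comb d y N (\<lambda>j. qs ! idx j) c"
    using xy unfolding same_coords_def by blast
  obtain N' idx' c' where idx': "\<forall>j<N'. idx' j < length ps"
    and cx': "is_conv_comb d x' N' (\<lambda>j. ps ! idx' j) c'" and cy': "is_conv_comb d y' N' (\<lambda>j. qs ! idx' j) c'"
    using xy' unfolding same_coords_def by blast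
  show ?thesis
  proof (rule conv_comb_dist[OF bm X _ _ cx cx' cy cy'])
    show "\<forall>j<N. ps ! idx j \<in> X \<and> qs ! idx j \<in> X"
      using idx len psX qsX by (simp add: subset_iff)
    show "\<forall>l<N'. ps ! idx' l \<in> X \<and> qs ! idx' l \<in> X"
      using idx' len psX qsX by (simp add: subset_iff)
    show "\<forall>j<N. \<forall>l<N'. d (qs ! idx j) (qs ! idx' l) = d (ps ! idx j) (ps ! idx' l)"
      using idx idx' D by simp
  qed
qed

lemma extend_isometry:
  assumes bm: "boolean_metric X d" and cv: "convex_bms X d"
    and psX: "set ps \<subseteq> X" and qsX: "set qs \<subseteq> X" and len: "length ps = length qs"
    and D: "\<forall>i<length ps. \<forall>j<length ps. d (qs!i) (qs!j) = d (ps!i) (ps!j)"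
    and span_ps: "spanned_by X d (set ps)" and span_qs: "spanned_by X d (set qs)"
  shows "\<exists>f. isometry_on X d f \<and> (\<forall>i<length ps. f (ps!i) = qs!i)"
proof -
  define F where "F x = (SOME y. y \<in> X \<and> same_coords d ps qs x y)" for x
  have F: "F x \<in> X \<and> same_coords d ps qs x (F x)" if "x \<in> X" for x
    unfolding F_def by (rule someI_ex) (use same_coords_exists[OF cv span_ps qsX len that] in blast)
  have F_dist: "d (F x) (F x') = d x x'" if "x \<in> X" "x' \<in> X" for x x'
    using same_coords_dist[OF bm psX qsX len D] F that by blast
  have F_unique: "F x = y" if xy: "x \<in> X" "y \<in> X" "same_coords d ps qs x y" for x y
  proof -
    have "d (F x) y = d x x"
      using same_coords_dist[OF bm psX qsX len D xy(1,1) _ xy(2) _ xy(3)] F[OF xy(1)] by blast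
    also have "\<dots> = 0" using bm_zero[OF bm xy(1) xy(1)] by simp
    finally show ?thesis using bm_zero[OF bm _ xy(2)] F[OF xy(1)] by blast
  qed
  have "inj_on F X"
  proof (rule inj_onI)
    fix x x' assume x: "x \<in> X" "x' \<in> X" and Fx: "F x = F x'"
    have FX: "F x' \<in> X" using F[OF x(2)] by simp
    have "d x x' = d (F x) (F x')" using F_dist[OF x] by simp
    also have "\<dots> = 0" using Fx bm_zero[OF bm FX FX] by simp
    finally show "x = x'" using bm_zero[OF bm x] by simp
  qed
  moreover have "F ` X = X"
  proof
    show "F ` X \<subseteq> X" using F by auto
    show "X \<subseteq> F ` X"
    proof
      fix y assume yX: "y \<in> X"
      obtain x where xX: "x \<in> X" and yx: "same_coords d qs ps y x"
        using same_coords_exists[OF cv span_qs psX len[symmetric] yX] by blast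
      have "F x = y" by (rule F_unique[OF xX yX same_coords_sym[OF len[symmetric] yx]])
      thus "y \<in> F ` X" using \<open>x \<in> X\<close> by blast
    qed
  qed
  ultimately have "isometry_on X d F" unfolding isometry_on_def bij_betw_def using F_dist by blast
  moreover have "\<forall>i<length ps. F (ps!i) = qs!i"
  proof (intro allI impI)
    fix i assume i: "i < length ps"
    have "ps!i \<in> X" "qs!i \<in> X" using i len psX qsX nth_mem by (metis subsetD)+
    thus "F (ps!i) = qs!i" using F_unique same_coords_point[OF bm i] by blast
  qed
  ultimately show ?thesis by blast
qed

theorem mainTheorem5:
  fixes X :: "'a set" and d :: "'a \<Rightarrow> 'a \<Rightarrow> 'b::boolean_ring"
    and z z' :: 'a and xs ys :: "'a list"
  assumes "boolean_metric X d" and "convex_bms X d"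
    and "z \<in> X" and "z' \<in> X"
    and "is_base X d z xs" and "is_base X d z' ys"
  shows "length xs = length ys \<and>
         (\<forall>i<length xs. d z (xs ! i) = d z' (ys ! i)) \<and>
         (\<exists>f. isometry_on X d f \<and> f z = z' \<and> (\<forall>i<length xs. f (xs ! i) = ys ! i))"
proof -
  note bm = assms(1) and cv = assms(2) and zX = assms(3) and z'X = assms(4)
    and bx = assms(5) and bY = assms(6)
  have len: "length xs = length ys"
    using base_length_le[OF bm zX z'X bx bY] base_length_le[OF bm z'X zX bY bx] by simp
  have norms: "\<forall>i<length xs. d z (xs ! i) = d z' (ys ! i)"
    using ble_antisym base_norm_le[OF bm zX z'X bx bY] base_norm_le[OF bm z'X zX bY bx] len by auto
  have frame: "\<forall>i<length (z # xs). \<forall>j<length (z # xs).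
      d ((z'#ys)!i) ((z'#ys)!j) = d ((z#xs)!i) ((z#xs)!j)"
    using base_frame_dist[OF bm zX z'X bx bY len norms] by blast
  obtain f where iso: "isometry_on X d f" and f: "\<forall>i<length (z # xs). f ((z#xs)!i) = (z'#ys)!i"
    using extend_isometry[OF bm cv _ _ _ frame base_spans[OF bx] base_spans[OF bY]]
      zX z'X base_subset[OF bx] base_subset[OF bY] len by auto
  have "f z = z'" using f by force
  moreover have "\<forall>i<length xs. f (xs ! i) = ys ! i" using f by fastforce
  ultimately show ?thesis using len norms iso by blast
qed

end
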